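(* Let $G=(V,\mathcal E,w)$ be an undirected, connected, weighted graph, and let $\tau=0$ (no time-delay). Fix one of the six uncertainty structures listed in the context. For $\alpha>0$, let $\eta_i(\alpha)$ (resp. $\nu_e(\alpha)$) denote the agent (resp. link) centrality indices of the network obtained by replacing every weight $w(e)$ by $\alpha w(e)$. Then for all $\alpha>0$: - for all agents $i,j$ (agent-associated structures), $\eta_i(\alpha)>\eta_j(\alpha)$ if and only if $\eta_i(1)>\eta_j(1)$; - for all links $e,f$ (link-associated structures), $\nu_e(\alpha)>\nu_f(\alpha)$ if and only if $\nu_e(1)>\nu_f(1)$. That is, the order of precedence of agents and the ranking of links are invariant under uniform scaling of all link weights.
   Context: Graph matrices: - $E$ is the signed incidence matrix (arbitrary orientation) and $W=\mathrm{diag}(w(e))$. - $L=EWE^T$ is the Laplacian, $\Delta$ the diagonal weighted-degree matrix, $A=\Delta-L$ the weighted adjacency matrix. - $M_n=I_n-\frac1n\mathbf1\mathbf1^T$. The network is $$\dot x(t)=-L\,x(t-\tau)+B\,\xi(t),\qquad y=M_nx,$$ with $\xi$ a vector of mutually independent zero-mean Gaussian white noises with intensities $\sigma_k^2$. The six uncertainty structures are: - agent-associated (noises indexed by agents): dynamics noise $B=I_n$; sensor noise $B=L$; receiver noise $B=\Delta$; emitter noise $B=A$; - link-associated (noises indexed by links): communication noise $B=EW$; measurement noise $B=-E$. In each case $B$ is computed from the (scaled) weights. The performance is $$\rho_{ss}=\lim_{t\to\infty}\mathbb E[y^Ty]=\frac1{2\pi}\int\mathrm{Tr}[G^HG]d\omega,\qquad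 G(s)=M_n(sI+e^{-\tau s}L)^{-1}B\,\mathrm{diag}(\sigma_k).$$ Centralities are $\eta_i=\partial\rho_{ss}/\partial\sigma_i^2$ (agent noise) and $\nu_e=\partial\rho_{ss}/\partial\sigma_e^2$ (link noise). *)

theory Defs
  imports "HOL-Analysis.Analysis"
begin

section \<open>Graphs: vertices = finite type 'v, edges = finite type 'e,
  each edge e oriented (arbitrarily) from tail e to head e\<close>

definition simple_undirected_graph :: "('e \<Rightarrow> 'v) \<Rightarrow> ('e \<Rightarrow> 'v) \<Rightarrow> bool" where
  "simple_undirected_graph head tail \<longleftrightarrow>
     (\<forall>e. head e \<noteq> tail e) \<and>
     (\<forall>e f. e \<noteq> f \<longrightarrow> {head e, tail e} \<noteq> {head f, tail f})"

definition adjacent :: "('e \<Rightarrow> 'v) \<Rightarrow> ('e \<Rightarrow> 'v) \<Rightarrow> 'v \<Rightarrow> 'v \<Rightarrow> bool" where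
  "adjacent head tail u v \<longleftrightarrow> (\<exists>e. (head e = u \<and> tail e = v) \<or> (head e = v \<and> tail e = u))"

definition connected_graph :: "('e \<Rightarrow> 'v) \<Rightarrow> ('e \<Rightarrow> 'v) \<Rightarrow> bool" where
  "connected_graph head tail \<longleftrightarrow> (\<forall>u v. (adjacent head tail)\<^sup>*\<^sup>* u v)"

definition diag_mat :: "('n \<Rightarrow> 'a::zero) \<Rightarrow> 'a^'n^'n" where
  "diag_mat d = (\<chi> i j. if i = j then d i else 0)"

definition incidence :: "('e \<Rightarrow> 'v) \<Rightarrow> ('e \<Rightarrow> 'v) \<Rightarrow> real^'e^'v" where
  "incidence head tail = (\<chi> v e. if v = head e then 1 else if v = tail e then -1 else 0)"

definition laplacian :: "('e::finite \<Rightarrow> 'v::finite) \<Rightarrow> ('e \<Rightarrow> 'v) \<Rightarrow> ('e \<Rightarrow> real) \<Rightarrow> real^'v^'v" where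
  "laplacian head tail w = incidence head tail ** diag_mat w ** transpose (incidence head tail)"

definition degree_mat :: "('e::finite \<Rightarrow> 'v::finite) \<Rightarrow> ('e \<Rightarrow> 'v) \<Rightarrow> ('e \<Rightarrow> real) \<Rightarrow> real^'v^'v" where
  "degree_mat head tail w = diag_mat (\<lambda>i. laplacian head tail w $ i $ i)"

definition adjacency_mat :: "('e::finite \<Rightarrow> 'v::finite) \<Rightarrow> ('e \<Rightarrow> 'v) \<Rightarrow> ('e \<Rightarrow> real) \<Rightarrow> real^'v^'v" where
  "adjacency_mat head tail w = degree_mat head tail w - laplacian head tail w"

definition centering :: "real^'n::finite^'n" where
  "centering = mat 1 - (\<chi> i j. 1 / real CARD('n))"

datatype agent_structure = Dynamics_noise | Sensor_noise | Receiver_noise | Emitter_noise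
datatype link_structure = Communication_noise | Measurement_noise

definition agent_B :: "agent_structure \<Rightarrow> ('e::finite \<Rightarrow> 'v::finite) \<Rightarrow> ('e \<Rightarrow> 'v) \<Rightarrow> ('e \<Rightarrow> real) \<Rightarrow> real^'v^'v" where
  "agent_B s head tail w = (case s of
      Dynamics_noise \<Rightarrow> mat 1
    | Sensor_noise \<Rightarrow> laplacian head tail w
    | Receiver_noise \<Rightarrow> degree_mat head tail w
    | Emitter_noise \<Rightarrow> adjacency_mat head tail w)"

definition link_B :: "link_structure \<Rightarrow> ('e::finite \<Rightarrow> 'v::finite) \<Rightarrow> ('e \<Rightarrow> 'v) \<Rightarrow> ('e \<Rightarrow> real) \<Rightarrow> real^'e^'v" where
  "link_B s head tail w = (case s of
      Communication_noise \<Rightarrow> incidence head tail ** diag_mat w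
    | Measurement_noise \<Rightarrow> - incidence head tail)"

definition cmat :: "real^'m^'n \<Rightarrow> complex^'m^'n" where
  "cmat A = (\<chi> i j. complex_of_real (A $ i $ j))"

definition conj_transpose :: "complex^'m^'n \<Rightarrow> complex^'n^'m" where
  "conj_transpose A = (\<chi> i j. cnj (A $ j $ i))"

definition transfer :: "real \<Rightarrow> real^'n::finite^'n \<Rightarrow> real^'k::finite^'n \<Rightarrow> ('k \<Rightarrow> real) \<Rightarrow> complex \<Rightarrow> complex^'k^'n" where
  "transfer tau L B sigma2 s =
     cmat centering ** matrix_inv (mat s + (\<chi> i j. exp (- (complex_of_real tau) * s) * (cmat L $ i $ j)))
       ** cmat B ** cmat (diag_mat (\<lambda>k. sqrt (sigma2 k)))"

definition rho_ss :: "real \<Rightarrow> real^'n::finite^'n \<Rightarrow> real^'k::finite^'n \<Rightarrow> ('k \<Rightarrow> real) \<Rightarrow> real" where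
  "rho_ss tau L B sigma2 = (1 / (2 * pi)) *
     (LINT \<omega>|lborel. Re (trace (conj_transpose (transfer tau L B sigma2 (\<i> * complex_of_real \<omega>))
                                 ** transfer tau L B sigma2 (\<i> * complex_of_real \<omega>))))"

definition centrality :: "real \<Rightarrow> real^'n::finite^'n \<Rightarrow> real^'k::finite^'n \<Rightarrow> ('k \<Rightarrow> real) \<Rightarrow> 'k \<Rightarrow> real" where
  "centrality tau L B sigma2 k = deriv (\<lambda>t. rho_ss tau L B (sigma2(k := t))) (sigma2 k)"

definition eta :: "real \<Rightarrow> agent_structure \<Rightarrow> ('e::finite \<Rightarrow> 'v::finite) \<Rightarrow> ('e \<Rightarrow> 'v) \<Rightarrow> ('e \<Rightarrow> real) \<Rightarrow> ('v \<Rightarrow> real) \<Rightarrow> 'v \<Rightarrow> real" where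
  "eta tau s head tail w sigma2 i = centrality tau (laplacian head tail w) (agent_B s head tail w) sigma2 i"

definition nu :: "real \<Rightarrow> link_structure \<Rightarrow> ('e::finite \<Rightarrow> 'v::finite) \<Rightarrow> ('e \<Rightarrow> 'v) \<Rightarrow> ('e \<Rightarrow> real) \<Rightarrow> ('e \<Rightarrow> real) \<Rightarrow> 'e \<Rightarrow> real" where
  "nu tau s head tail w sigma2 e = centrality tau (laplacian head tail w) (link_B s head tail w) sigma2 e"

end

theory Submission imports Defs begin

text \<open>Without delay the transfer matrix at \<open>s = \<i>\<omega>\<close> is \<open>M (\<i>\<omega> I + L)\<^sup>-\<^sup>1 B diag(\<sigma>)\<close>, so
  \<open>\<rho>\<^sub>s\<^sub>s = (1/2\<pi>) \<Sum>\<^sub>k \<sigma>\<^sub>k\<^sup>2 \<integral> h\<^sub>k(\<omega>) d\<omega>\<close> with \<open>h\<^sub>k\<close> the squared norm of the \<open>k\<close>-th column of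
  \<open>M (\<i>\<omega> I + L)\<^sup>-\<^sup>1 B\<close>; it is affine in each \<open>\<sigma>\<^sub>k\<^sup>2\<close>, hence differentiable in it.
  Scaling all weights by \<open>\<alpha>\<close> replaces \<open>L\<close> by \<open>\<alpha> L\<close> and \<open>B\<close> by \<open>\<beta> B\<close> with \<open>\<beta> \<in> {1, \<alpha>}\<close>.
  Since \<open>(\<i>\<omega> I + \<alpha> L)\<^sup>-\<^sup>1 = \<alpha>\<^sup>-\<^sup>1 (\<i>(\<omega>/\<alpha>) I + L)\<^sup>-\<^sup>1\<close>, the substitution \<open>\<omega> = \<alpha>\<omega>'\<close> gives
  \<open>\<rho>\<^sub>s\<^sub>s(\<alpha>) = (\<beta>\<^sup>2/\<alpha>) \<rho>\<^sub>s\<^sub>s(1)\<close>: every centrality is multiplied by the same positive constant.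
  Invertibility of \<open>\<i>\<omega> I + L\<close> for \<open>\<omega> \<noteq> 0\<close> only needs \<open>L\<close> real symmetric.\<close>

lemma quadratic_form_symmetric_real_matrix_Im:
  fixes L :: "real^'n::finite^'n" and x :: "complex^'n"
  assumes "transpose L = L"
  shows "Im (\<Sum>i\<in>UNIV. cnj (x$i) * (\<Sum>j\<in>UNIV. complex_of_real (L$i$j) * x$j)) = 0"
    (is "Im ?S = 0")
proof -
  have L_sym: "\<And>i j. L$i$j = L$j$i" using assms by (metis transpose_def vec_lambda_beta)
  have "cnj ?S = (\<Sum>i\<in>UNIV. \<Sum>j\<in>UNIV. complex_of_real (L$i$j) * x$i * cnj (x$j))"
    by (simp add: sum_distrib_left mult_ac)
  also have "\<dots> = (\<Sum>j\<in>UNIV. \<Sum>i\<in>UNIV. complex_of_real (L$i$j) * x$i * cnj (x$j))"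
    by (rule sum.swap)
  also have "\<dots> = ?S"
    by (simp add: sum_distrib_left mult_ac L_sym)
  finally have "Im (cnj ?S) = Im ?S" by (rule arg_cong)
  then show ?thesis by (simp only: cnj.sel(2))
qed

definition freq_mat :: "real^'n::finite^'n \<Rightarrow> real \<Rightarrow> complex^'n^'n" where
  "freq_mat L \<omega> = mat (\<i> * complex_of_real \<omega>) + cmat L"

lemma freq_mat_kernel_trivial:
  fixes L :: "real^'n::finite^'n"
  assumes sym: "transpose L = L" and "\<omega> \<noteq> 0" and x: "freq_mat L \<omega> *v x = 0"
  shows "x = 0"
proof -
  define S where "S = (\<Sum>i\<in>UNIV. cnj (x$i) * (\<Sum>j\<in>UNIV. complex_of_real (L$i$j) * x$j))"
  have row: "\<i> * complex_of_real \<omega> * x$i + (\<Sum>j\<in>UNIV. complex_of_real (L$i$j) * x$j) = 0" for i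
  proof -
    have "(freq_mat L \<omega> *v x)$i = 0" using x by simp
    then show ?thesis
      by (simp add: freq_mat_def matrix_vector_mult_def cmat_def mat_def sum.distrib distrib_right
            if_distrib[where f="\<lambda>z. z * _"] cong: if_cong)
  qed
  have norm_sq: "(\<Sum>i\<in>UNIV. cnj (x$i) * x$i) = complex_of_real (\<Sum>i\<in>UNIV. (cmod (x$i))\<^sup>2)"
    unfolding of_real_sum by (rule sum.cong[OF refl]) (simp only: complex_norm_square mult.commute)
  have "0 = (\<Sum>i\<in>UNIV. cnj (x$i) * (\<i> * complex_of_real \<omega> * x$i + (\<Sum>j\<in>UNIV. complex_of_real (L$i$j) * x$j)))"
    using row by simp
  also have "\<dots> = \<i> * complex_of_real \<omega> * (\<Sum>i\<in>UNIV. cnj (x$i) * x$i) + S"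
    by (simp add: S_def distrib_left sum.distrib sum_distrib_left mult_ac)
  finally have "0 = Im (\<i> * complex_of_real \<omega> * complex_of_real (\<Sum>i\<in>UNIV. (cmod (x$i))\<^sup>2) + S)"
    unfolding norm_sq by simp
  then have "\<omega> * (\<Sum>i\<in>UNIV. (cmod (x$i))\<^sup>2) = 0"
    using quadratic_form_symmetric_real_matrix_Im[OF sym, of x] by (simp add: S_def)
  then have "(\<Sum>i\<in>UNIV. (cmod (x$i))\<^sup>2) = 0" using \<open>\<omega> \<noteq> 0\<close> by simp
  then show "x = 0" by (simp add: sum_nonneg_eq_0_iff vec_eq_iff)
qed

lemma freq_mat_invertible:
  fixes L :: "real^'n::finite^'n"
  assumes "transpose L = L" and "\<omega> \<noteq> 0"
  shows "invertible (freq_mat L \<omega>)"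
  using freq_mat_kernel_trivial[OF assms] matrix_left_invertible_ker invertible_left_inverse by blast

lemma matrix_inv:
  fixes A :: "'a::semiring_1^'n^'m"
  assumes "invertible A"
  shows "A ** matrix_inv A = mat 1" and "matrix_inv A ** A = mat 1"
proof -
  have "\<exists>A'. A ** A' = mat 1 \<and> A' ** A = mat 1" using assms unfolding invertible_def by blast
  then have "A ** matrix_inv A = mat 1 \<and> matrix_inv A ** A = mat 1"
    unfolding matrix_inv_def by (rule someI_ex)
  then show "A ** matrix_inv A = mat 1" "matrix_inv A ** A = mat 1" by auto
qed

lemma matrix_inv_unique:
  fixes A :: "'a::comm_ring_1^'n^'n"
  assumes "A ** B = mat 1" and "B ** A = mat 1"
  shows "matrix_inv A = B"
proof -
  have "invertible A" using assms unfolding invertible_def by blast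
  have "matrix_inv A = matrix_inv A ** (A ** B)" using assms by simp
  also have "\<dots> = (matrix_inv A ** A) ** B" by (simp add: matrix_mul_assoc)
  also have "\<dots> = B" using matrix_inv(2)[OF \<open>invertible A\<close>] by simp
  finally show ?thesis .
qed

lemma matrix_inv_scaleR:
  fixes A :: "complex^'n::finite^'n"
  assumes "invertible A" and "c \<noteq> 0"
  shows "matrix_inv (c *\<^sub>R A) = (1/c) *\<^sub>R matrix_inv A"
  by (rule matrix_inv_unique)
     (use matrix_inv[OF assms(1)] assms(2) in \<open>simp_all add: matrix_scalar_ac flip: scalar_matrix_assoc\<close>)

lemma matrix_inv_entry_cramer:
  fixes A :: "'a::field^'n::finite^'n"
  assumes "invertible A"
  shows "matrix_inv A $ k $ j = det (\<chi> i l. if l = k then (if i = j then 1 else 0) else A$i$l) / det A"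
proof -
  define v where "v = (\<chi> k. matrix_inv A $ k $ j)"
  define e where "e = (\<chi> i. if i = j then 1 else (0::'a))"
  have "A *v v = (\<chi> i. (A ** matrix_inv A) $ i $ j)"
    by (simp add: v_def matrix_vector_mult_def matrix_matrix_mult_def)
  also have "\<dots> = e"
    using matrix_inv(1)[OF assms] by (simp add: mat_def e_def)
  finally have "v = (\<chi> k. det (\<chi> i l. if l = k then e$i else A$i$l) / det A)"
    using cramer assms invertible_det_nz by blast
  then have "v $ k = det (\<chi> i l. if l = k then e$i else A$i$l) / det A"
    by simp
  moreover have "(\<chi> i l. if l = k then e$i else A$i$l) = (\<chi> i l. if l = k then (if i = j then 1 else 0) else A$i$l)"
    by (simp add: e_def vec_eq_iff)
  ultimately show ?thesis by (simp add: v_def)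
qed

lemma continuous_on_det:
  fixes f :: "'a::topological_space \<Rightarrow> 'n::finite \<Rightarrow> 'n \<Rightarrow> 'b::real_normed_field"
  assumes "\<And>i j. continuous_on S (\<lambda>x. f x i j)"
  shows "continuous_on S (\<lambda>x. det (\<chi> i j. f x i j))"
  unfolding det_def by (simp add: assms continuous_intros)

lemma continuous_on_matrix_inv_freq_mat:
  fixes L :: "real^'n::finite^'n"
  assumes "transpose L = L"
  shows "continuous_on (-{0}) (\<lambda>\<omega>. matrix_inv (freq_mat L \<omega>) $ a $ b)"
proof -
  have entry: "continuous_on S (\<lambda>\<omega>. freq_mat L \<omega> $ i $ l)" for S i l
    by (cases "i = l") (simp_all add: freq_mat_def mat_def cmat_def continuous_intros)
  then have entry_or_const: "continuous_on S (\<lambda>\<omega>. if P then c else freq_mat L \<omega> $ i $ l)" for S P c i l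
    by (cases P) auto
  have "continuous_on (-{0}) (\<lambda>\<omega>. det (\<chi> i l. if l = a then (if i = b then 1 else 0) else freq_mat L \<omega> $ i $ l)
                                  / det (\<chi> i l. freq_mat L \<omega> $ i $ l))"
    using freq_mat_invertible[OF assms] invertible_det_nz
    by (intro continuous_on_divide continuous_on_det) (auto simp: entry entry_or_const)
  then show ?thesis
    by (rule continuous_on_eq) (simp add: matrix_inv_entry_cramer freq_mat_invertible[OF assms])
qed

definition freq_response :: "real^'n::finite^'n \<Rightarrow> real^'k::finite^'n \<Rightarrow> real \<Rightarrow> complex^'k^'n" where
  "freq_response L B \<omega> = cmat centering ** matrix_inv (freq_mat L \<omega>) ** cmat B"

definition column_energy :: "real^'n::finite^'n \<Rightarrow> real^'k::finite^'n \<Rightarrow> 'k \<Rightarrow> real \<Rightarrow> real" where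
  "column_energy L B k \<omega> = (\<Sum>j\<in>UNIV. (cmod (freq_response L B \<omega> $ j $ k))\<^sup>2)"

lemma column_energy_nonneg: "column_energy L B k \<omega> \<ge> 0"
  unfolding column_energy_def by (simp add: sum_nonneg)

lemma column_energy_borel_measurable:
  fixes L :: "real^'n::finite^'n"
  assumes "transpose L = L"
  shows "column_energy L B k \<in> borel_measurable borel"
proof (rule borel_measurable_continuous_countable_exceptions[where X="{0}"])
  have "continuous_on (-{0}) (\<lambda>\<omega>. freq_response L B \<omega> $ j $ k)" for j
    unfolding freq_response_def matrix_matrix_mult_def
    by (simp add: continuous_on_matrix_inv_freq_mat[OF assms] continuous_intros)
  then show "continuous_on (-{0}) (column_energy L B k)"
    unfolding column_energy_def by (intro continuous_on_sum continuous_on_power continuous_on_norm)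
qed auto

lemma transfer_delay_free:
  "transfer 0 L B \<sigma> (\<i> * complex_of_real \<omega>) = freq_response L B \<omega> ** cmat (diag_mat (\<lambda>k. sqrt (\<sigma> k)))"
  unfolding transfer_def freq_response_def freq_mat_def by simp

lemma matrix_mult_cmat_diag_entry:
  fixes Y :: "complex^'k::finite^'n::finite"
  shows "(Y ** cmat (diag_mat d)) $ j $ k = Y $ j $ k * complex_of_real (d k)"
  unfolding matrix_matrix_mult_def cmat_def diag_mat_def
  by (simp add: if_distrib[where f=complex_of_real] if_distrib[where f="\<lambda>z. _ * z"] cong: if_cong)

lemma Re_trace_conj_transpose_mult:
  fixes X :: "complex^'k::finite^'n::finite"
  shows "Re (trace (conj_transpose X ** X)) = (\<Sum>k\<in>UNIV. \<Sum>j\<in>UNIV. (cmod (X $ j $ k))\<^sup>2)"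
  unfolding trace_def conj_transpose_def matrix_matrix_mult_def
  by (simp add: Re_sum complex_mult_cnj power2_eq_square cmod_def)

lemma real_sqrt_pow2_abs: "(sqrt x)\<^sup>2 = \<bar>x\<bar>"
  by (metis real_sqrt_abs real_sqrt_pow2 abs_ge_zero real_sqrt_power)

lemma rho_ss_delay_free:
  "rho_ss 0 L B \<sigma> = (1/(2*pi)) * (LINT \<omega>|lborel. (\<Sum>k\<in>UNIV. \<bar>\<sigma> k\<bar> * column_energy L B k \<omega>))"
proof -
  have "Re (trace (conj_transpose (transfer 0 L B \<sigma> (\<i> * complex_of_real \<omega>))
                   ** transfer 0 L B \<sigma> (\<i> * complex_of_real \<omega>)))
        = (\<Sum>k\<in>UNIV. \<bar>\<sigma> k\<bar> * column_energy L B k \<omega>)" for \<omega>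
    unfolding transfer_delay_free Re_trace_conj_transpose_mult matrix_mult_cmat_diag_entry column_energy_def
    by (simp add: norm_mult power_mult_distrib real_sqrt_pow2_abs sum_distrib_left mult_ac)
  then show ?thesis unfolding rho_ss_def by simp
qed

lemma integrable_dominated_nonneg:
  fixes F g :: "'a \<Rightarrow> real"
  assumes "integrable M F" and [measurable]: "g \<in> borel_measurable M"
    and "\<And>x. 0 \<le> g x" and "s > 0" and "\<And>x. s * g x \<le> F x"
  shows "integrable M g"
proof (rule Bochner_Integration.integrable_bound[where f="\<lambda>x. F x / s"])
  show "AE x in M. norm (g x) \<le> norm (F x / s)"
    using assms(3-5) by (intro AE_I2) (smt (verit) le_divide_eq mult.commute norm_ge_zero real_norm_def)
qed (use assms(1) in auto)

lemma integrable_affine_family_iff: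
  fixes F g :: "'a \<Rightarrow> real"
  assumes [measurable]: "F \<in> borel_measurable M" "g \<in> borel_measurable M"
    and g_nonneg: "\<And>x. 0 \<le> g x" and "s > 0" and F_ge: "\<And>x. s * g x \<le> F x" and "t > 0"
  shows "integrable M (\<lambda>x. F x + (t - s) * g x) \<longleftrightarrow> integrable M F"
proof
  assume int: "integrable M (\<lambda>x. F x + (t - s) * g x)"
  have "\<bar>F x\<bar> \<le> \<bar>(1 + s / t) * (F x + (t - s) * g x)\<bar>" for x
  proof -
    define G where "G = F x + (t - s) * g x"
    have "t * g x \<le> G" using F_ge[of x] by (simp add: G_def algebra_simps)
    then have "s * g x \<le> (s / t) * G"
      using \<open>s > 0\<close> \<open>t > 0\<close> mult_left_mono[of "t * g x" G "s / t"] by simp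
    moreover have "(1 + s / t) * G = G + (s / t) * G" by (simp add: algebra_simps)
    moreover have "0 \<le> t * g x" using g_nonneg[of x] \<open>t > 0\<close> by simp
    moreover have "0 \<le> s * g x" using g_nonneg[of x] \<open>s > 0\<close> by simp
    ultimately show ?thesis using F_ge[of x] \<open>t * g x \<le> G\<close> by (simp add: G_def algebra_simps)
  qed
  then show "integrable M F"
    by (intro Bochner_Integration.integrable_bound[OF integrable_mult_right[OF int]]) auto
next
  assume int: "integrable M F"
  then have "integrable M g" using integrable_dominated_nonneg assms by blast
  then show "integrable M (\<lambda>x. F x + (t - s) * g x)" using int by auto
qed

lemma integral_affine_family_has_derivative:
  fixes F g :: "'a \<Rightarrow> real"
  assumes [measurable]: "F \<in> borel_measurable M" "g \<in> borel_measurable M"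
    and "\<And>x. 0 \<le> g x" and "s > 0" and "\<And>x. s * g x \<le> F x"
  shows "\<exists>D. ((\<lambda>t. LINT x|M. F x + (t - s) * g x) has_real_derivative D) (at s)"
proof (cases "integrable M F")
  case True
  then have "integrable M g" using integrable_dominated_nonneg assms by blast
  with True have "(\<lambda>t. LINT x|M. F x + (t - s) * g x) = (\<lambda>t. (LINT x|M. F x) + (t - s) * (LINT x|M. g x))"
    by auto
  then show ?thesis by (auto intro!: derivative_eq_intros)
next
  case False
  \<comment> \<open>then the integrand is non-integrable for every \<open>t > 0\<close>, where the Bochner integral is \<open>0\<close>\<close>
  have "((\<lambda>t. 0) has_real_derivative 0) (at s)" by simp
  then have "((\<lambda>t. LINT x|M. F x + (t - s) * g x) has_real_derivative 0) (at s)"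
    by (rule has_field_derivative_transform_within_open[of _ _ _ "{0<..}"])
       (use \<open>s > 0\<close> False integrable_affine_family_iff[OF assms] not_integrable_integral_eq in auto)
  then show ?thesis by blast
qed

lemma rho_ss_has_derivative_in_noise:
  fixes L :: "real^'n::finite^'n" and B :: "real^'k::finite^'n"
  assumes sym: "transpose L = L" and pos: "\<forall>j. \<sigma> j > 0"
  shows "\<exists>D. ((\<lambda>t. rho_ss 0 L B (\<sigma>(k:=t))) has_real_derivative D) (at (\<sigma> k))"
proof -
  define h where "h = column_energy L B"
  define F where "F = (\<lambda>\<omega>. \<Sum>j\<in>UNIV. \<sigma> j * h j \<omega>)"
  have [measurable]: "h j \<in> borel_measurable borel" for j
    unfolding h_def by (rule column_energy_borel_measurable[OF sym])
  have h_nonneg: "0 \<le> h j \<omega>" for j \<omega> unfolding h_def by (rule column_energy_nonneg)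
  have "\<sigma> k * h k \<omega> \<le> F \<omega>" for \<omega>
    unfolding F_def using pos h_nonneg
    by (intro member_le_sum) (auto intro: mult_nonneg_nonneg less_imp_le)
  then obtain D where D: "((\<lambda>t. LINT \<omega>|lborel. F \<omega> + (t - \<sigma> k) * h k \<omega>) has_real_derivative D) (at (\<sigma> k))"
    using integral_affine_family_has_derivative[of F lborel "h k" "\<sigma> k"] pos h_nonneg
    unfolding F_def by auto
  have "rho_ss 0 L B (\<sigma>(k:=t)) = (1/(2*pi)) * (LINT \<omega>|lborel. F \<omega> + (t - \<sigma> k) * h k \<omega>)" if "t > 0" for t
  proof -
    have "(\<Sum>j\<in>UNIV. \<bar>(\<sigma>(k:=t)) j\<bar> * h j \<omega>) = F \<omega> + (t - \<sigma> k) * h k \<omega>" for \<omega>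
    proof -
      have "(\<Sum>j\<in>UNIV. \<bar>(\<sigma>(k:=t)) j\<bar> * h j \<omega>)
            = (\<Sum>j\<in>UNIV. \<sigma> j * h j \<omega> + (if j = k then (t - \<sigma> k) * h k \<omega> else 0))"
        using that pos by (intro sum.cong) (auto simp: algebra_simps abs_of_pos)
      then show ?thesis unfolding F_def by (simp add: sum.distrib)
    qed
    then show ?thesis unfolding rho_ss_delay_free h_def by simp
  qed
  then have "((\<lambda>t. rho_ss 0 L B (\<sigma>(k:=t))) has_real_derivative (1/(2*pi)) * D) (at (\<sigma> k))"
    by (intro has_field_derivative_transform_within_open[OF DERIV_cmult[OF D], of "{0<..}"])
       (use pos in auto)
  then show ?thesis by blast
qed

lemma cmat_scaleR: "cmat (c *\<^sub>R A) = c *\<^sub>R cmat A"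
  by (simp add: cmat_def vec_eq_iff) (simp add: scaleR_conv_of_real)

lemma freq_mat_scaleR:
  assumes "\<alpha> \<noteq> 0"
  shows "freq_mat (\<alpha> *\<^sub>R L) \<omega> = \<alpha> *\<^sub>R freq_mat L (\<omega> / \<alpha>)"
  using assms by (simp add: freq_mat_def cmat_def mat_def vec_eq_iff) (simp add: scaleR_conv_of_real field_simps)

lemma freq_response_scaleR:
  fixes L :: "real^'n::finite^'n"
  assumes sym: "transpose L = L" and "\<alpha> \<noteq> 0" and "\<omega> \<noteq> 0"
  shows "freq_response (\<alpha> *\<^sub>R L) (\<beta> *\<^sub>R B) \<omega> = (\<beta> / \<alpha>) *\<^sub>R freq_response L B (\<omega> / \<alpha>)"
proof -
  have "invertible (freq_mat L (\<omega> / \<alpha>))" using freq_mat_invertible[OF sym] assms by simp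
  then have "matrix_inv (freq_mat (\<alpha> *\<^sub>R L) \<omega>) = (1/\<alpha>) *\<^sub>R matrix_inv (freq_mat L (\<omega> / \<alpha>))"
    using \<open>\<alpha> \<noteq> 0\<close> by (simp add: freq_mat_scaleR matrix_inv_scaleR)
  then show ?thesis
    unfolding freq_response_def cmat_scaleR by (simp add: matrix_scalar_ac flip: scalar_matrix_assoc)
qed

lemma column_energy_scaleR:
  fixes L :: "real^'n::finite^'n"
  assumes "transpose L = L" and "\<alpha> \<noteq> 0" and "\<omega> \<noteq> 0"
  shows "column_energy (\<alpha> *\<^sub>R L) (\<beta> *\<^sub>R B) k \<omega> = (\<beta> / \<alpha>)\<^sup>2 * column_energy L B k (\<omega> / \<alpha>)"
  unfolding column_energy_def freq_response_scaleR[OF assms]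
  by (simp add: sum_distrib_left power_mult_distrib power_divide)

lemma rho_ss_scaleR:
  fixes L :: "real^'n::finite^'n" and B :: "real^'k::finite^'n"
  assumes sym: "transpose L = L" and "\<alpha> > 0"
  shows "rho_ss 0 (\<alpha> *\<^sub>R L) (\<beta> *\<^sub>R B) \<sigma> = (\<beta>\<^sup>2 / \<alpha>) * rho_ss 0 L B \<sigma>"
proof -
  define F where "F = (\<lambda>\<omega>. \<Sum>k\<in>UNIV. \<bar>\<sigma> k\<bar> * column_energy L B k \<omega>)"
  define F' where "F' = (\<lambda>\<omega>. \<Sum>k\<in>UNIV. \<bar>\<sigma> k\<bar> * column_energy (\<alpha> *\<^sub>R L) (\<beta> *\<^sub>R B) k \<omega>)"
  have sym': "transpose (\<alpha> *\<^sub>R L) = \<alpha> *\<^sub>R L"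
    using sym by (simp add: transpose_def vec_eq_iff)
  have [measurable]: "F \<in> borel_measurable borel" "F' \<in> borel_measurable borel"
    unfolding F_def F'_def
    using column_energy_borel_measurable[OF sym] column_energy_borel_measurable[OF sym'] by measurable
  have "\<alpha> \<noteq> 0" using \<open>\<alpha> > 0\<close> by simp
  have "AE \<omega> in lborel. F' \<omega> = (\<beta> / \<alpha>)\<^sup>2 * F (\<omega> / \<alpha>)"
    using AE_lborel_singleton[of 0]
    by eventually_elim (simp add: F_def F'_def column_energy_scaleR[OF sym \<open>\<alpha> \<noteq> 0\<close>] sum_distrib_left mult_ac)
  then have "(LINT \<omega>|lborel. F' \<omega>) = (\<beta> / \<alpha>)\<^sup>2 * (LINT \<omega>|lborel. F (\<omega> / \<alpha>))"
    by (subst integral_cong_AE) auto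
  also have "(LINT \<omega>|lborel. F (\<omega> / \<alpha>)) = \<alpha> * (LINT \<omega>|lborel. F \<omega>)"
    using lborel_integral_real_affine[of \<alpha> "\<lambda>\<omega>. F (\<omega> / \<alpha>)" 0] \<open>\<alpha> > 0\<close> by simp
  finally have "(LINT \<omega>|lborel. F' \<omega>) = (\<beta>\<^sup>2 / \<alpha>) * (LINT \<omega>|lborel. F \<omega>)"
    using \<open>\<alpha> > 0\<close> by (simp add: power_divide power2_eq_square)
  then show ?thesis unfolding rho_ss_delay_free F_def[symmetric] F'_def[symmetric] by simp
qed

lemma centrality_scaleR:
  fixes L :: "real^'n::finite^'n" and B :: "real^'k::finite^'n"
  assumes sym: "transpose L = L" and "\<alpha> > 0" and pos: "\<forall>j. \<sigma> j > 0"
  shows "centrality 0 (\<alpha> *\<^sub>R L) (\<beta> *\<^sub>R B) \<sigma> k = (\<beta>\<^sup>2 / \<alpha>) * centrality 0 L B \<sigma> k"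
proof -
  obtain D where D: "((\<lambda>t. rho_ss 0 L B (\<sigma>(k:=t))) has_real_derivative D) (at (\<sigma> k))"
    using rho_ss_has_derivative_in_noise[OF sym pos] by blast
  have scaled: "(\<lambda>t. rho_ss 0 (\<alpha> *\<^sub>R L) (\<beta> *\<^sub>R B) (\<sigma>(k:=t))) = (\<lambda>t. (\<beta>\<^sup>2 / \<alpha>) * rho_ss 0 L B (\<sigma>(k:=t)))"
    using rho_ss_scaleR[OF sym \<open>\<alpha> > 0\<close>] by auto
  show ?thesis
    unfolding centrality_def scaled using DERIV_imp_deriv[OF DERIV_cmult[OF D, of "\<beta>\<^sup>2 / \<alpha>"]] DERIV_imp_deriv[OF D] by simp
qed

lemma centrality_order_scaleR:
  fixes L :: "real^'n::finite^'n" and B :: "real^'k::finite^'n"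
  assumes "transpose L = L" and "\<alpha> > 0" and "\<beta> \<noteq> 0" and "\<forall>j. \<sigma> j > 0"
  shows "centrality 0 (\<alpha> *\<^sub>R L) (\<beta> *\<^sub>R B) \<sigma> i > centrality 0 (\<alpha> *\<^sub>R L) (\<beta> *\<^sub>R B) \<sigma> j
    \<longleftrightarrow> centrality 0 L B \<sigma> i > centrality 0 L B \<sigma> j"
proof -
  have "\<beta>\<^sup>2 / \<alpha> > 0" using assms by simp
  then show ?thesis by (simp only: centrality_scaleR[OF assms(1,2,4)] mult_less_cancel_left_pos)
qed

lemma diag_mat_scale: "diag_mat (\<lambda>e. \<alpha> * w e) = \<alpha> *\<^sub>R (diag_mat w :: real^'n^'n)"
  by (simp add: diag_mat_def vec_eq_iff)

lemma laplacian_scale: "laplacian head tail (\<lambda>e. \<alpha> * w e) = \<alpha> *\<^sub>R laplacian head tail w"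
  unfolding laplacian_def diag_mat_scale by (simp add: matrix_scalar_ac flip: scalar_matrix_assoc)

lemma laplacian_symmetric:
  fixes head tail :: "'e::finite \<Rightarrow> 'v::finite"
  shows "transpose (laplacian head tail w) = laplacian head tail w"
proof -
  have "transpose (diag_mat w :: real^'e^'e) = diag_mat w"
    by (simp add: diag_mat_def transpose_def vec_eq_iff)
  then show ?thesis unfolding laplacian_def by (simp add: matrix_transpose_mul matrix_mul_assoc)
qed

lemma degree_mat_scale: "degree_mat head tail (\<lambda>e. \<alpha> * w e) = \<alpha> *\<^sub>R degree_mat head tail w"
  unfolding degree_mat_def laplacian_scale by (simp add: diag_mat_def vec_eq_iff)

lemma adjacency_mat_scale: "adjacency_mat head tail (\<lambda>e. \<alpha> * w e) = \<alpha> *\<^sub>R adjacency_mat head tail w"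
  unfolding adjacency_mat_def degree_mat_scale laplacian_scale by (simp add: scaleR_diff_right)

lemma agent_B_scale:
  assumes "\<alpha> \<noteq> 0"
  obtains \<beta> where "\<beta> \<noteq> 0" and "agent_B s head tail (\<lambda>e. \<alpha> * w e) = \<beta> *\<^sub>R agent_B s head tail w"
  using assms that[of 1] that[of \<alpha>]
  by (cases s) (auto simp: agent_B_def laplacian_scale degree_mat_scale adjacency_mat_scale)

lemma link_B_scale:
  assumes "\<alpha> \<noteq> 0"
  obtains \<beta> where "\<beta> \<noteq> 0" and "link_B s head tail (\<lambda>e. \<alpha> * w e) = \<beta> *\<^sub>R link_B s head tail w"
  using assms that[of 1] that[of \<alpha>]
  by (cases s) (auto simp: link_B_def diag_mat_scale matrix_scalar_ac simp flip: scalar_matrix_assoc)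

theorem theorem11:
  fixes head tail :: "'e::finite \<Rightarrow> 'v::finite" and w :: "'e \<Rightarrow> real"
  assumes "simple_undirected_graph head tail"
    and "connected_graph head tail"
    and "\<forall>e. w e > 0"
  shows "(\<forall>(s::agent_structure) (sigma2::'v \<Rightarrow> real) (\<alpha>::real) i j.
            (\<forall>k. sigma2 k > 0) \<longrightarrow> \<alpha> > 0 \<longrightarrow>
            (eta 0 s head tail (\<lambda>e. \<alpha> * w e) sigma2 i > eta 0 s head tail (\<lambda>e. \<alpha> * w e) sigma2 j
              \<longleftrightarrow> eta 0 s head tail w sigma2 i > eta 0 s head tail w sigma2 j))
       \<and> (\<forall>(s::link_structure) (sigma2::'e \<Rightarrow> real) (\<alpha>::real) e f.
            (\<forall>k. sigma2 k > 0) \<longrightarrow> \<alpha> > 0 \<longrightarrow>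
            (nu 0 s head tail (\<lambda>e. \<alpha> * w e) sigma2 e > nu 0 s head tail (\<lambda>e. \<alpha> * w e) sigma2 f
              \<longleftrightarrow> nu 0 s head tail w sigma2 e > nu 0 s head tail w sigma2 f))"
proof (intro conjI allI impI)
  fix s :: agent_structure and sigma2 :: "'v \<Rightarrow> real" and \<alpha> :: real and i j
  assume pos: "\<forall>k. sigma2 k > 0" and "\<alpha> > 0"
  obtain \<beta> where "\<beta> \<noteq> 0" and B: "agent_B s head tail (\<lambda>e. \<alpha> * w e) = \<beta> *\<^sub>R agent_B s head tail w"
    by (rule agent_B_scale[of \<alpha> s head tail w]) (use \<open>\<alpha> > 0\<close> in auto)
  then show "eta 0 s head tail (\<lambda>e. \<alpha> * w e) sigma2 i > eta 0 s head tail (\<lambda>e. \<alpha> * w e) sigma2 j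
              \<longleftrightarrow> eta 0 s head tail w sigma2 i > eta 0 s head tail w sigma2 j"
    unfolding eta_def B laplacian_scale
    using centrality_order_scaleR[OF laplacian_symmetric \<open>\<alpha> > 0\<close> _ pos] by blast
next
  fix s :: link_structure and sigma2 :: "'e \<Rightarrow> real" and \<alpha> :: real and e f
  assume pos: "\<forall>k. sigma2 k > 0" and "\<alpha> > 0"
  obtain \<beta> where "\<beta> \<noteq> 0" and B: "link_B s head tail (\<lambda>e. \<alpha> * w e) = \<beta> *\<^sub>R link_B s head tail w"
    by (rule link_B_scale[of \<alpha> s head tail w]) (use \<open>\<alpha> > 0\<close> in auto)
  then show "nu 0 s head tail (\<lambda>e. \<alpha> * w e) sigma2 e > nu 0 s head tail (\<lambda>e. \<alpha> * w e) sigma2 f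
              \<longleftrightarrow> nu 0 s head tail w sigma2 e > nu 0 s head tail w sigma2 f"
    unfolding nu_def B laplacian_scale
    using centrality_order_scaleR[OF laplacian_symmetric \<open>\<alpha> > 0\<close> _ pos] by blast
qed

end
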